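(* Let $\sigma>0$, $p\in(0,1)$ and $\delta\in(0,1)$. Let $\pi_0(z)=\sigma^{-2}z\,e^{-z^2/(2\sigma^2)}$ and $\pi_\delta(z)=\sigma^{-2}\delta^{-2}z\,e^{-z^2/(2\sigma^2\delta^2)}$ for $z\ge0$ (the densities of $\beta$ and $\delta\beta$ for $\beta\sim\mathrm{Rayleigh}(\sigma)$). Define $$G(\delta,\lambda)=\lambda p-\int_0^\infty\big(\lambda\pi_0(z)-\pi_\delta(z)\big)_+\,dz,\qquad (s)_+=\max\{0,s\}.$$ Then $\lambda\mapsto G(\delta,\lambda)$ attains its maximum over $\lambda\ge0$ at $\lambda_\delta=\delta^{-2}p^{(1-\delta^2)/\delta^2}$, and $$\max_{\lambda\ge0}G(\delta,\lambda)=p^{\delta^{-2}}.$$ Consequently, for $\gamma_1\in(0,1)$, $\min_{\delta\in[\gamma_1,1)}\max_{\lambda\ge0}G(\delta,\lambda)=p^{\gamma_1^{-2}}$ (as an infimum over $[\gamma_1,1)$), and $p^{\gamma_1^{-2}}>\tfrac12$ if and only if $\gamma_1>\sqrt{\log p/\log\tfrac12}$.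
   Context: A random variable $\zeta$ has the Rayleigh distribution with scale $\sigma>0$, written $\zeta\sim\mathrm{Rayleigh}(\sigma)$, if it has density $p_\zeta(z)=\sigma^{-2}z\,e^{-z^2/(2\sigma^2)}$ for $z\ge 0$ (and $0$ for $z<0$). *)

theory Defs
  imports "HOL-Analysis.Analysis"
begin

definition pi0 :: "real \<Rightarrow> real \<Rightarrow> real" where
  "pi0 \<sigma> z = z / \<sigma>\<^sup>2 * exp (- z\<^sup>2 / (2 * \<sigma>\<^sup>2))"

definition pi_delta :: "real \<Rightarrow> real \<Rightarrow> real \<Rightarrow> real" where
  "pi_delta \<sigma> \<delta> z = z / (\<sigma>\<^sup>2 * \<delta>\<^sup>2) * exp (- z\<^sup>2 / (2 * \<sigma>\<^sup>2 * \<delta>\<^sup>2))"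

definition G :: "real \<Rightarrow> real \<Rightarrow> real \<Rightarrow> real \<Rightarrow> real" where
  "G \<sigma> p \<delta> lam = lam * p - (LINT z:{0..}|lborel. max 0 (lam * pi0 \<sigma> z - pi_delta \<sigma> \<delta> z))"

end

theory Submission
  imports Defs "HOL-Real_Asymp.Real_Asymp"
begin

text \<open>
  The integrand \<open>lam * pi0 - pi_delta\<close> equals \<open>pi0 z * (lam - exp (- c z^2) / \<delta>^2)\<close>
  with \<open>c = (1 - \<delta>^2) / (2 \<sigma>^2 \<delta>^2) > 0\<close>, so it is nonpositive up to a single crossing
  point \<open>z0\<close> and nonnegative beyond it. The integral of its positive part is therefore minus
  the value at \<open>z0\<close> of the antiderivative \<open>exp (- z^2 / (2 \<sigma>^2 \<delta>^2)) - lam exp (- z^2 / (2 \<sigma>^2))\<close>.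
  For \<open>t = lam \<delta>^2 \<le> 1\<close> this gives \<open>G = (t p - (1 - \<delta>^2) t^(1/(1-\<delta>^2))) / \<delta>^2\<close>, which
  Young's inequality with the conjugate exponents \<open>1/(1 - \<delta>^2)\<close> and \<open>1/\<delta>^2\<close> bounds by
  \<open>p^(1/\<delta>^2)\<close>, with equality at \<open>t = p^((1-\<delta>^2)/\<delta>^2)\<close>. For \<open>t \<ge> 1\<close>, \<open>G\<close> is affine and
  decreasing in \<open>lam\<close>.
\<close>

lemma set_integral_max0_single_crossing:
  fixes f F :: "real \<Rightarrow> real"
  assumes f_borel: "f \<in> borel_measurable borel" and "a \<le> c"
    and nonpos: "\<And>x. a \<le> x \<Longrightarrow> x \<le> c \<Longrightarrow> f x \<le> 0"
    and nonneg: "\<And>x. c \<le> x \<Longrightarrow> 0 \<le> f x"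
    and deriv: "\<And>x. c \<le> x \<Longrightarrow> DERIV F x :> f x"
    and lim: "(F \<longlongrightarrow> T) at_top"
  shows "(LINT x:{a..}|lborel. max 0 (f x)) = T - F c"
proof -
  have F_mono: "F x \<le> F y" if "c \<le> x" "x \<le> y" for x y
    using that deriv nonneg by (intro DERIV_nonneg_imp_nondecreasing[of x y F]) (meson order_trans)+
  have "F c \<le> T"
    by (rule tendsto_lowerbound[OF lim]) (auto simp: eventually_at_top_linorder intro: F_mono)
  have "ennreal (indicator {a..} x *\<^sub>R max 0 (f x)) = ennreal (f x) * indicator {c..} x" for x
    using nonpos[of x] nonneg[of x] nonpos[of c] nonneg[of c] \<open>a \<le> c\<close>
    by (cases "a \<le> x"; cases "c \<le> x") (auto simp: indicator_def max_def)
  then have "(\<integral>\<^sup>+x. ennreal (indicator {a..} x *\<^sub>R max 0 (f x)) \<partial>lborel) = ennreal (T - F c)"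
    using nn_integral_FTC_atLeast[OF f_borel deriv nonneg lim] by simp
  then have "has_bochner_integral lborel (\<lambda>x. indicator {a..} x *\<^sub>R max 0 (f x)) (T - F c)"
    using \<open>F c \<le> T\<close> f_borel by (intro has_bochner_integral_nn_integral) auto
  then show ?thesis
    unfolding set_lebesgue_integral_def by (rule has_bochner_integral_integral_eq)
qed

lemma pi_delta_eq_pi0_mult:
  assumes "\<sigma> > 0" "\<delta> > 0"
  shows "pi_delta \<sigma> \<delta> z = pi0 \<sigma> z * (exp (- ((1 - \<delta>\<^sup>2) / (2 * \<sigma>\<^sup>2 * \<delta>\<^sup>2)) * z\<^sup>2) / \<delta>\<^sup>2)"
proof -
  have "exp (- z\<^sup>2 / (2 * \<sigma>\<^sup>2 * \<delta>\<^sup>2))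
      = exp (- z\<^sup>2 / (2 * \<sigma>\<^sup>2)) * exp (- ((1 - \<delta>\<^sup>2) / (2 * \<sigma>\<^sup>2 * \<delta>\<^sup>2)) * z\<^sup>2)"
    unfolding exp_add[symmetric] using assms by (simp add: field_simps)
  then show ?thesis
    unfolding pi0_def pi_delta_def using assms by (simp add: field_simps)
qed

lemma set_integral_max0_pi_diff:
  assumes "\<sigma> > 0" "\<delta> > 0" "z0 \<ge> 0"
    and above: "\<And>z. 0 < z \<Longrightarrow> z \<le> z0 \<Longrightarrow> lam * \<delta>\<^sup>2 \<le> exp (- ((1 - \<delta>\<^sup>2) / (2 * \<sigma>\<^sup>2 * \<delta>\<^sup>2)) * z\<^sup>2)"
    and below: "\<And>z. z0 \<le> z \<Longrightarrow> exp (- ((1 - \<delta>\<^sup>2) / (2 * \<sigma>\<^sup>2 * \<delta>\<^sup>2)) * z\<^sup>2) \<le> lam * \<delta>\<^sup>2"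
  shows "(LINT z:{0..}|lborel. max 0 (lam * pi0 \<sigma> z - pi_delta \<sigma> \<delta> z))
       = lam * exp (- z0\<^sup>2 / (2 * \<sigma>\<^sup>2)) - exp (- z0\<^sup>2 / (2 * \<sigma>\<^sup>2 * \<delta>\<^sup>2))"
proof -
  define r where "r z = exp (- ((1 - \<delta>\<^sup>2) / (2 * \<sigma>\<^sup>2 * \<delta>\<^sup>2)) * z\<^sup>2) / \<delta>\<^sup>2" for z
  have diff: "lam * pi0 \<sigma> z - pi_delta \<sigma> \<delta> z = pi0 \<sigma> z * (lam - r z)" for z
    using pi_delta_eq_pi0_mult[OF assms(1,2)] unfolding r_def by (simp add: algebra_simps)
  have pi0_nonneg: "0 \<le> z \<Longrightarrow> 0 \<le> pi0 \<sigma> z" for z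
    unfolding pi0_def by simp
  have "(LINT z:{0..}|lborel. max 0 (lam * pi0 \<sigma> z - pi_delta \<sigma> \<delta> z))
      = 0 - (exp (- z0\<^sup>2 / (2 * \<sigma>\<^sup>2 * \<delta>\<^sup>2)) - lam * exp (- z0\<^sup>2 / (2 * \<sigma>\<^sup>2)))"
  proof (rule set_integral_max0_single_crossing[OF _ \<open>z0 \<ge> 0\<close>])
    show "(\<lambda>z. lam * pi0 \<sigma> z - pi_delta \<sigma> \<delta> z) \<in> borel_measurable borel"
      unfolding pi0_def pi_delta_def by measurable
    show "lam * pi0 \<sigma> z - pi_delta \<sigma> \<delta> z \<le> 0" if "0 \<le> z" "z \<le> z0" for z
    proof (cases "z = 0")
      case False
      then show ?thesis
        using above[of z] that \<open>\<delta> > 0\<close> pi0_nonneg[OF \<open>0 \<le> z\<close>]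
        unfolding diff r_def by (intro mult_nonneg_nonpos) (auto simp: field_simps)
    qed (simp add: pi0_def pi_delta_def)
    show "0 \<le> lam * pi0 \<sigma> z - pi_delta \<sigma> \<delta> z" if "z0 \<le> z" for z
      using below[OF that] \<open>\<delta> > 0\<close> pi0_nonneg[of z] that \<open>z0 \<ge> 0\<close>
      unfolding diff r_def by (intro mult_nonneg_nonneg) (auto simp: field_simps)
    show "DERIV (\<lambda>z. exp (- z\<^sup>2 / (2 * \<sigma>\<^sup>2 * \<delta>\<^sup>2)) - lam * exp (- z\<^sup>2 / (2 * \<sigma>\<^sup>2)))
            z :> lam * pi0 \<sigma> z - pi_delta \<sigma> \<delta> z" for z
      unfolding pi0_def pi_delta_def using assms
      by (auto intro!: derivative_eq_intros simp: field_simps power2_eq_square)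
    have "((\<lambda>z. exp (- z\<^sup>2 / b)) \<longlongrightarrow> 0) at_top" if "b > 0" for b :: real
      using that by real_asymp
    from tendsto_diff[OF this tendsto_mult_right_zero[OF this]] assms(1,2)
    show "((\<lambda>z. exp (- z\<^sup>2 / (2 * \<sigma>\<^sup>2 * \<delta>\<^sup>2)) - lam * exp (- z\<^sup>2 / (2 * \<sigma>\<^sup>2))) \<longlongrightarrow> 0) at_top"
      by simp
  qed
  then show ?thesis by simp
qed

lemma G_zero:
  assumes "\<sigma> > 0" "\<delta> > 0"
  shows "G \<sigma> p \<delta> 0 = 0"
proof -
  have "max 0 (0 * pi0 \<sigma> z - pi_delta \<sigma> \<delta> z) = 0" if "z \<ge> 0" for z
    using assms that by (simp add: pi_delta_def)
  then show ?thesis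
    unfolding G_def by (subst set_lebesgue_integral_cong[where g = "\<lambda>_. 0"]) auto
qed

lemma G_eq_if_le_inverse_square:
  assumes "\<sigma> > 0" "0 < \<delta>" "\<delta> < 1" "lam > 0" "lam * \<delta>\<^sup>2 \<le> 1"
  shows "G \<sigma> p \<delta> lam = lam * p - (1 - \<delta>\<^sup>2) / \<delta>\<^sup>2 * (lam * \<delta>\<^sup>2) powr (1 / (1 - \<delta>\<^sup>2))"
proof -
  define d where "d = \<delta>\<^sup>2"
  define t where "t = lam * d"
  define c where "c = (1 - d) / (2 * \<sigma>\<^sup>2 * d)"
  have d: "0 < d" "d < 1"
    unfolding d_def using assms by (auto simp: power_less_one_iff)
  have c: "c > 0"
    unfolding c_def using assms d by simp
  have t: "0 < t" "t \<le> 1"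
    using assms d unfolding t_def d_def by auto
  have "- ln t / c \<ge> 0"
    using t c by (simp add: divide_nonpos_pos)
  define z0 where "z0 = sqrt (- ln t / c)"
  have z0: "z0 \<ge> 0" "c * z0\<^sup>2 = - ln t"
    unfolding z0_def using \<open>- ln t / c \<ge> 0\<close> c by auto
  have crossing: "t \<le> exp (- c * z\<^sup>2) \<longleftrightarrow> z\<^sup>2 \<le> z0\<^sup>2"
    "exp (- c * z\<^sup>2) \<le> t \<longleftrightarrow> z0\<^sup>2 \<le> z\<^sup>2" for z
  proof -
    have "t \<le> exp (- c * z\<^sup>2) \<longleftrightarrow> ln t \<le> - c * z\<^sup>2"
      "exp (- c * z\<^sup>2) \<le> t \<longleftrightarrow> - c * z\<^sup>2 \<le> ln t"
      using t by (metis exp_le_cancel_iff exp_ln)+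
    moreover have "ln t \<le> - c * z\<^sup>2 \<longleftrightarrow> c * z\<^sup>2 \<le> c * z0\<^sup>2"
      "- c * z\<^sup>2 \<le> ln t \<longleftrightarrow> c * z0\<^sup>2 \<le> c * z\<^sup>2"
      using z0(2) by linarith+
    ultimately show "t \<le> exp (- c * z\<^sup>2) \<longleftrightarrow> z\<^sup>2 \<le> z0\<^sup>2"
      "exp (- c * z\<^sup>2) \<le> t \<longleftrightarrow> z0\<^sup>2 \<le> z\<^sup>2"
      using c by simp_all
  qed
  have "(LINT z:{0..}|lborel. max 0 (lam * pi0 \<sigma> z - pi_delta \<sigma> \<delta> z))
       = lam * exp (- z0\<^sup>2 / (2 * \<sigma>\<^sup>2)) - exp (- z0\<^sup>2 / (2 * \<sigma>\<^sup>2 * \<delta>\<^sup>2))"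
  proof (rule set_integral_max0_pi_diff[OF assms(1,2) z0(1)])
    show "lam * \<delta>\<^sup>2 \<le> exp (- ((1 - \<delta>\<^sup>2) / (2 * \<sigma>\<^sup>2 * \<delta>\<^sup>2)) * z\<^sup>2)" if "0 < z" "z \<le> z0" for z
      using crossing(1)[of z] power_mono[OF that(2)] that(1)
      unfolding t_def c_def d_def by simp
    show "exp (- ((1 - \<delta>\<^sup>2) / (2 * \<sigma>\<^sup>2 * \<delta>\<^sup>2)) * z\<^sup>2) \<le> lam * \<delta>\<^sup>2" if "z0 \<le> z" for z
      using crossing(2)[of z] power_mono[OF that z0(1)]
      unfolding t_def c_def d_def by simp
  qed
  moreover have "exp (- z0\<^sup>2 / (2 * \<sigma>\<^sup>2)) = t powr (d / (1 - d))"
    using z0(2) t d assms(1) by (simp add: powr_def c_def field_simps)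
  moreover have "exp (- z0\<^sup>2 / (2 * \<sigma>\<^sup>2 * \<delta>\<^sup>2)) = t powr (1 / (1 - d))"
    using z0(2) t d assms(1) by (simp add: powr_def c_def d_def field_simps)
  moreover have "lam * t powr (d / (1 - d)) = t powr (1 / (1 - d)) / d"
  proof -
    have "t * t powr (d / (1 - d)) = t powr (1 + d / (1 - d))"
      using t by (simp add: powr_add)
    also have "1 + d / (1 - d) = 1 / (1 - d)"
      using d by (simp add: field_simps)
    finally show ?thesis
      using d by (simp add: t_def field_simps)
  qed
  ultimately show ?thesis
    using d unfolding G_def t_def d_def by (simp add: field_simps)
qed

lemma G_eq_if_ge_inverse_square:
  assumes "\<sigma> > 0" "0 < \<delta>" "\<delta> < 1" "lam * \<delta>\<^sup>2 \<ge> 1"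
  shows "G \<sigma> p \<delta> lam = 1 - lam * (1 - p)"
proof -
  have "(LINT z:{0..}|lborel. max 0 (lam * pi0 \<sigma> z - pi_delta \<sigma> \<delta> z))
       = lam * exp (- 0\<^sup>2 / (2 * \<sigma>\<^sup>2)) - exp (- 0\<^sup>2 / (2 * \<sigma>\<^sup>2 * \<delta>\<^sup>2))"
  proof (rule set_integral_max0_pi_diff[OF assms(1,2)])
    fix z :: real
    have "0 \<le> (1 - \<delta>\<^sup>2) / (2 * \<sigma>\<^sup>2 * \<delta>\<^sup>2) * z\<^sup>2"
      using assms(2,3) by (simp add: power_le_one)
    then have "exp (- ((1 - \<delta>\<^sup>2) / (2 * \<sigma>\<^sup>2 * \<delta>\<^sup>2)) * z\<^sup>2) \<le> 1"
      by simp
    then show "exp (- ((1 - \<delta>\<^sup>2) / (2 * \<sigma>\<^sup>2 * \<delta>\<^sup>2)) * z\<^sup>2) \<le> lam * \<delta>\<^sup>2"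
      using assms(4) by linarith
  qed auto
  then show ?thesis
    unfolding G_def by (simp add: algebra_simps)
qed

lemma G_le_powr_inverse_square:
  assumes "\<sigma> > 0" "0 < p" "p < 1" "0 < \<delta>" "\<delta> < 1" "lam \<ge> 0"
  shows "G \<sigma> p \<delta> lam \<le> p powr (1 / \<delta>\<^sup>2)"
proof -
  define d where "d = \<delta>\<^sup>2"
  have d: "0 < d" "d < 1"
    unfolding d_def using assms by (auto simp: power_less_one_iff)
  have bound_below: "G \<sigma> p \<delta> l \<le> p powr (1 / d)" if "l > 0" "l * d \<le> 1" for l
  proof -
    have "(l * d) * p \<le> (l * d) powr (1 / (1 - d)) / (1 / (1 - d)) + p powr (1 / d) / (1 / d)"
      using d that assms(2) by (intro Youngs_inequality) (auto simp: field_simps)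
    then have young: "l * d * p \<le> (1 - d) * (l * d) powr (1 / (1 - d)) + d * p powr (1 / d)"
      by (simp add: mult.commute)
    have "G \<sigma> p \<delta> l = l * p - (1 - d) / d * (l * d) powr (1 / (1 - d))"
      using G_eq_if_le_inverse_square[where p = p, OF assms(1,4,5) that[unfolded d_def]]
      unfolding d_def .
    then have "d * G \<sigma> p \<delta> l = l * d * p - (1 - d) * (l * d) powr (1 / (1 - d))"
      using d by (simp add: field_simps)
    with young have "d * G \<sigma> p \<delta> l \<le> d * p powr (1 / d)"
      by linarith
    then show ?thesis
      using d by simp
  qed
  consider "lam = 0" | "lam > 0" "lam * d \<le> 1" | "lam * d \<ge> 1"
    using assms(6) by fastforce
  then show ?thesis
  proof cases
    case 1
    then show ?thesis
      using G_zero[OF assms(1,4)] by simp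
  next
    case 2
    then show ?thesis
      using bound_below unfolding d_def by simp
  next
    case 3
    have "1 / d * (1 - p) \<le> lam * (1 - p)"
      using 3 d assms(3) by (intro mult_right_mono) (auto simp: field_simps)
    then have "G \<sigma> p \<delta> lam \<le> G \<sigma> p \<delta> (1 / d)"
      using G_eq_if_ge_inverse_square[OF assms(1,4,5)] 3 d
      unfolding d_def by simp
    also have "\<dots> \<le> p powr (1 / d)"
      using bound_below[of "1 / d"] d by simp
    finally show ?thesis
      unfolding d_def .
  qed
qed

lemma G_at_maximizer:
  assumes "\<sigma> > 0" "0 < p" "p < 1" "0 < \<delta>" "\<delta> < 1"
  shows "G \<sigma> p \<delta> (p powr ((1 - \<delta>\<^sup>2) / \<delta>\<^sup>2) / \<delta>\<^sup>2) = p powr (1 / \<delta>\<^sup>2)"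
proof -
  define d where "d = \<delta>\<^sup>2"
  define t where "t = p powr ((1 - d) / d)"
  have d: "0 < d" "d < 1"
    unfolding d_def using assms by (auto simp: power_less_one_iff)
  have "t \<le> p powr 0"
    unfolding t_def using assms(2,3) d by (intro powr_mono') auto
  then have t: "0 < t" "t \<le> 1"
    unfolding t_def using assms(2) by auto
  have "t * p = p powr (1 / d)"
  proof -
    have "t * p = p powr ((1 - d) / d + 1)"
      unfolding t_def using assms(2) by (simp add: powr_add)
    also have "(1 - d) / d + 1 = 1 / d"
      using d by (simp add: field_simps)
    finally show ?thesis .
  qed
  moreover have "t powr (1 / (1 - d)) = p powr (1 / d)"
    unfolding t_def using d by (simp add: powr_powr)
  moreover have "G \<sigma> p \<delta> (t / d) = t / d * p - (1 - d) / d * t powr (1 / (1 - d))"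
    using G_eq_if_le_inverse_square[OF assms(1,4,5), of "t / d"] t d unfolding d_def by simp
  ultimately show ?thesis
    using d unfolding t_def d_def by (simp add: field_simps)
qed

lemma SUP_G_eq_powr_inverse_square:
  assumes "\<sigma> > 0" "0 < p" "p < 1" "0 < \<delta>" "\<delta> < 1"
  shows "(SUP lam\<in>{0..}. G \<sigma> p \<delta> lam) = p powr (1 / \<delta>\<^sup>2)"
proof (rule cSup_eq_maximum)
  show "p powr (1 / \<delta>\<^sup>2) \<in> G \<sigma> p \<delta> ` {0..}"
    using G_at_maximizer[OF assms] by (metis atLeast_iff image_eqI powr_ge_zero zero_le_divide_iff zero_le_power2)
  show "x \<le> p powr (1 / \<delta>\<^sup>2)" if "x \<in> G \<sigma> p \<delta> ` {0..}" for x
    using that G_le_powr_inverse_square[OF assms(1-5)] by auto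
qed

lemma INF_powr_inverse_square:
  fixes p \<gamma> :: real
  assumes "0 < p" "p \<le> 1" "0 < \<gamma>" "\<gamma> < 1"
  shows "(INF \<delta>\<in>{\<gamma>..<1}. p powr (1 / \<delta>\<^sup>2)) = p powr (1 / \<gamma>\<^sup>2)"
proof (rule cInf_eq_minimum)
  show "p powr (1 / \<gamma>\<^sup>2) \<in> (\<lambda>\<delta>. p powr (1 / \<delta>\<^sup>2)) ` {\<gamma>..<1}"
    using assms by auto
  show "p powr (1 / \<gamma>\<^sup>2) \<le> x" if x_in: "x \<in> (\<lambda>\<delta>. p powr (1 / \<delta>\<^sup>2)) ` {\<gamma>..<1}" for x
  proof -
    obtain \<delta> where x: "x = p powr (1 / \<delta>\<^sup>2)" and "\<gamma> \<le> \<delta>"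
      using x_in by auto
    then have "1 / \<delta>\<^sup>2 \<le> 1 / \<gamma>\<^sup>2"
      using assms(3) by (intro divide_left_mono power_mono) auto
    then show ?thesis
      unfolding x using assms(1,2) by (intro powr_mono') auto
  qed
qed

lemma powr_inverse_square_gt_half_iff:
  fixes p \<gamma> :: real
  assumes "0 < p" "p < 1" "0 < \<gamma>"
  shows "p powr (1 / \<gamma>\<^sup>2) > 1 / 2 \<longleftrightarrow> \<gamma> > sqrt (ln p / ln (1 / 2))"
proof -
  have "p powr (1 / \<gamma>\<^sup>2) > 1 / 2 \<longleftrightarrow> exp (ln p / \<gamma>\<^sup>2) > exp (ln (1 / 2))"
    using assms(1) by (simp add: powr_def)
  also have "\<dots> \<longleftrightarrow> ln p > ln (1 / 2) * \<gamma>\<^sup>2"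
    using assms(3) by (simp only: exp_less_cancel_iff pos_less_divide_eq zero_less_power2)
  also have "\<dots> \<longleftrightarrow> ln p / ln (1 / 2) < \<gamma>\<^sup>2"
    by (simp add: divide_less_eq mult.commute)
  also have "\<dots> \<longleftrightarrow> sqrt (ln p / ln (1 / 2)) < sqrt (\<gamma>\<^sup>2)"
    by (simp only: real_sqrt_less_iff)
  finally show ?thesis
    using assms(3) by simp
qed

theorem mainTheorem6:
  fixes \<sigma> p :: real
  assumes "\<sigma> > 0" and "0 < p" and "p < 1"
  shows "(\<forall>\<delta>\<in>{0<..<1::real}.
            let lamd = p powr ((1 - \<delta>\<^sup>2) / \<delta>\<^sup>2) / \<delta>\<^sup>2 in
              lamd \<ge> 0
            \<and> (\<forall>lam\<ge>0. G \<sigma> p \<delta> lam \<le> G \<sigma> p \<delta> lamd)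
            \<and> (SUP lam\<in>{0..}. G \<sigma> p \<delta> lam) = p powr (1 / \<delta>\<^sup>2)
            \<and> G \<sigma> p \<delta> lamd = p powr (1 / \<delta>\<^sup>2))
       \<and> (\<forall>\<gamma>\<^sub>1\<in>{0<..<1::real}.
            (INF \<delta>\<in>{\<gamma>\<^sub>1..<1}. SUP lam\<in>{0..}. G \<sigma> p \<delta> lam) = p powr (1 / \<gamma>\<^sub>1\<^sup>2)
          \<and> (p powr (1 / \<gamma>\<^sub>1\<^sup>2) > 1/2 \<longleftrightarrow> \<gamma>\<^sub>1 > sqrt (ln p / ln (1/2))))"
proof (intro conjI ballI)
  fix \<delta> :: real
  assume "\<delta> \<in> {0<..<1}"
  then have \<delta>: "0 < \<delta>" "\<delta> < 1"
    by auto
  show "let lamd = p powr ((1 - \<delta>\<^sup>2) / \<delta>\<^sup>2) / \<delta>\<^sup>2 in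
          lamd \<ge> 0
        \<and> (\<forall>lam\<ge>0. G \<sigma> p \<delta> lam \<le> G \<sigma> p \<delta> lamd)
        \<and> (SUP lam\<in>{0..}. G \<sigma> p \<delta> lam) = p powr (1 / \<delta>\<^sup>2)
        \<and> G \<sigma> p \<delta> lamd = p powr (1 / \<delta>\<^sup>2)"
    using G_le_powr_inverse_square[OF assms \<delta>] G_at_maximizer[OF assms \<delta>]
      SUP_G_eq_powr_inverse_square[OF assms \<delta>]
    by (simp add: Let_def)
next
  fix \<gamma> :: real
  assume "\<gamma> \<in> {0<..<1}"
  then have \<gamma>: "0 < \<gamma>" "\<gamma> < 1"
    by auto
  have "(INF \<delta>\<in>{\<gamma>..<1}. SUP lam\<in>{0..}. G \<sigma> p \<delta> lam) = (INF \<delta>\<in>{\<gamma>..<1}. p powr (1 / \<delta>\<^sup>2))"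
    using SUP_G_eq_powr_inverse_square[OF assms] \<gamma> by (intro INF_cong) auto
  also have "\<dots> = p powr (1 / \<gamma>\<^sup>2)"
    using INF_powr_inverse_square assms \<gamma> by simp
  finally show "(INF \<delta>\<in>{\<gamma>..<1}. SUP lam\<in>{0..}. G \<sigma> p \<delta> lam) = p powr (1 / \<gamma>\<^sup>2)" .
  show "p powr (1 / \<gamma>\<^sup>2) > 1/2 \<longleftrightarrow> \<gamma> > sqrt (ln p / ln (1/2))"
    using powr_inverse_square_gt_half_iff[OF assms(2,3) \<gamma>(1)] by simp
qed

end
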